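(* Let $a_1,\dots,a_d$ be positive integers with $\gcd(a_1,\dots,a_d)=1$ and let $N$ be a positive integer. Let $\mathcal M$ be a maximal element (for inclusion) of $\mathfrak M$ with $0\in\mathcal M$, and let $i\in\{0,\dots,N-1\}$. Then $\mathcal M$ contains an element congruent to $i$ modulo $N$.
   Context: $\mathcal S_+=\{N+\sum_ic_ia_i: c_i\in\mathbb Z_{\ge0}\}$, $\mathcal S_-=-\mathcal S_+$, $\mathcal S=\mathcal S_+\cup\mathcal S_-$, and $\mathfrak M=\{\mathcal M\subset\mathbb Z:\ m,m'\in\mathcal M\Rightarrow m-m'\notin\mathcal S\}$, partially ordered by inclusion. *)

theory Defs
  imports Main
begin

definition Splus :: "nat \<Rightarrow> (nat \<Rightarrow> int) \<Rightarrow> int \<Rightarrow> int set" where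
  "Splus d a N = {N + (\<Sum>i=1..d. c i * a i) | c. \<forall>i\<in>{1..d}. c i \<ge> 0}"

definition Sminus :: "nat \<Rightarrow> (nat \<Rightarrow> int) \<Rightarrow> int \<Rightarrow> int set" where
  "Sminus d a N = uminus ` Splus d a N"

definition Sset :: "nat \<Rightarrow> (nat \<Rightarrow> int) \<Rightarrow> int \<Rightarrow> int set" where
  "Sset d a N = Splus d a N \<union> Sminus d a N"

definition frakM :: "nat \<Rightarrow> (nat \<Rightarrow> int) \<Rightarrow> int \<Rightarrow> int set set" where
  "frakM d a N = {M. \<forall>m\<in>M. \<forall>m'\<in>M. m - m' \<notin> Sset d a N}"

definition maximal_in :: "'a set \<Rightarrow> 'a set set \<Rightarrow> bool" where
  "maximal_in M F \<longleftrightarrow> M \<in> F \<and> (\<forall>M'\<in>F. M \<subseteq> M' \<longrightarrow> M' = M)"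

end

theory Submission
  imports Defs
begin

text \<open>
  Write \<open>T\<close> for the numerical semigroup generated by \<open>a\<^sub>1, \<dots>, a\<^sub>d\<close>, so that
  \<open>\<S>\<^sub>+ = N + T\<close>. Suppose the residue class of \<open>i\<close> misses \<open>M\<close>. By maximality every
  \<open>x \<equiv> i\<close> is comparable with some \<open>m \<in> M\<close>, i.e. \<open>x - m \<in> \<S>\<^sub>+\<close> or \<open>m - x \<in> \<S>\<^sub>+\<close>.
  If \<open>m - x \<in> \<S>\<^sub>+\<close> for some \<open>m \<in> M\<close>, then \<open>m - (x + N) \<in> T\<close>, so \<open>x + N\<close> cannot lie
  above any \<open>m' \<in> M\<close>: otherwise \<open>m - m' \<in> T + \<S>\<^sub>+ \<subseteq> \<S>\<^sub>+\<close>. Hence \<open>x + N\<close> again lies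
  below an element of \<open>M\<close>. Since \<open>T\<close> contains all large integers and \<open>0 \<in> M\<close>, very
  negative \<open>x \<equiv> i\<close> lie below \<open>0\<close>, and \<open>M\<close> is bounded above; walking up the residue
  class in steps of \<open>N\<close> gives a contradiction.
\<close>

definition semigroup_gen :: "nat \<Rightarrow> (nat \<Rightarrow> int) \<Rightarrow> int set" where
  "semigroup_gen d a = {(\<Sum>i=1..d. c i * a i) | c. \<forall>i\<in>{1..d}. c i \<ge> 0}"

lemma semigroup_genI:
  assumes "\<forall>i\<in>{1..d}. c i \<ge> 0"
  shows "(\<Sum>i=1..d. c i * a i) \<in> semigroup_gen d a"
  using assms unfolding semigroup_gen_def by blast

lemma semigroup_genE:
  assumes "t \<in> semigroup_gen d a"
  obtains c where "\<forall>i\<in>{1..d}. c i \<ge> 0" "t = (\<Sum>i=1..d. c i * a i)"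
  using assms unfolding semigroup_gen_def by blast

lemma semigroup_gen_nonneg:
  assumes "\<forall>j\<in>{1..d}. a j \<ge> 0" and "t \<in> semigroup_gen d a"
  shows "t \<ge> 0"
  using assms by (auto elim!: semigroup_genE intro!: sum_nonneg)

lemma semigroup_gen_add:
  assumes "s \<in> semigroup_gen d a" and "t \<in> semigroup_gen d a"
  shows "s + t \<in> semigroup_gen d a"
proof -
  obtain b c where "\<forall>i\<in>{1..d}. b i \<ge> 0" "s = (\<Sum>i=1..d. b i * a i)"
    and "\<forall>i\<in>{1..d}. c i \<ge> 0" "t = (\<Sum>i=1..d. c i * a i)"
    using assms by (auto elim!: semigroup_genE)
  then show ?thesis
    using semigroup_genI[of d "\<lambda>i. b i + c i" a] by (simp add: sum.distrib distrib_right)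
qed

lemma semigroup_gen_mult:
  assumes "t \<in> semigroup_gen d a" and "k \<ge> 0"
  shows "k * t \<in> semigroup_gen d a"
proof -
  obtain c where "\<forall>i\<in>{1..d}. c i \<ge> 0" "t = (\<Sum>i=1..d. c i * a i)"
    using assms(1) by (auto elim!: semigroup_genE)
  then show ?thesis
    using semigroup_genI[of d "\<lambda>i. k * c i" a] \<open>k \<ge> 0\<close>
    by (simp add: sum_distrib_left mult.assoc)
qed

lemma semigroup_gen_generator:
  assumes "j \<in> {1..d}"
  shows "a j \<in> semigroup_gen d a"
proof -
  have "(\<Sum>i=1..d. (if i = j then 1 else 0) * a i) = (\<Sum>i\<in>{1..d}. if i = j then a i else 0)"
    by (intro sum.cong) auto
  then show ?thesis
    using semigroup_genI[of d "\<lambda>i. if i = j then 1 else 0" a] assms by simp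
qed

lemma sum_eq_Gcd: "\<exists>c::nat \<Rightarrow> int. (\<Sum>i=1..d. c i * a i) = Gcd (a ` {1..d})"
proof (induction d)
  case 0
  then show ?case by simp
next
  case (Suc d)
  obtain c where c: "(\<Sum>i=1..d. c i * a i) = Gcd (a ` {1..d})"
    using Suc.IH by blast
  obtain u v where uv: "u * a (Suc d) + v * Gcd (a ` {1..d}) = gcd (a (Suc d)) (Gcd (a ` {1..d}))"
    using bezout_int by blast
  have "{1..Suc d} = insert (Suc d) {1..d}" by auto
  then have "Gcd (a ` {1..Suc d}) = gcd (a (Suc d)) (Gcd (a ` {1..d}))" by simp
  moreover have "(\<Sum>i=1..Suc d. (if i = Suc d then u else v * c i) * a i)
      = u * a (Suc d) + v * (\<Sum>i=1..d. c i * a i)"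
    by (simp add: sum_distrib_left mult.assoc)
  ultimately show ?case
    using c uv by metis
qed

text \<open>The Frobenius bound: \<open>n = r s + q g\<close> with \<open>r = n mod g\<close> and \<open>q \<ge> 0\<close>.\<close>
lemma mem_semigroup_gen_if_ge:
  assumes g_in: "g \<in> semigroup_gen d a" and "g > 0"
    and s_in: "s \<in> semigroup_gen d a" and "s \<ge> 0" and s_cong: "g dvd s - 1"
    and n: "n \<ge> (g - 1) * s"
  shows "n \<in> semigroup_gen d a"
proof -
  define r where "r = n mod g"
  have r: "0 \<le> r" "r \<le> g - 1"
    using \<open>g > 0\<close> by (auto simp: r_def)
  then have "r * s \<le> n"
    using n \<open>s \<ge> 0\<close> mult_right_mono[of r "g - 1" s] by linarith
  have "g dvd n - r"
    by (simp add: r_def mod_0_imp_dvd mod_diff_right_eq[symmetric])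
  moreover have "n - r * s = (n - r) - r * (s - 1)"
    by (simp add: algebra_simps)
  ultimately obtain q where q: "n - r * s = g * q"
    using s_cong by (metis dvd_diff dvd_mult dvdE)
  then have "g * q \<ge> 0"
    using \<open>r * s \<le> n\<close> by linarith
  then have "q \<ge> 0"
    using \<open>g > 0\<close> by (simp add: zero_le_mult_iff)
  have "n = r * s + q * g"
    using q by (simp add: algebra_simps)
  then show ?thesis
    using semigroup_gen_add semigroup_gen_mult s_in g_in r \<open>q \<ge> 0\<close> by metis
qed

lemma semigroup_gen_contains_large:
  assumes pos: "\<forall>j\<in>{1..d}. a j > 0" and coprime: "Gcd (a ` {1..d}) = 1"
  shows "\<exists>F. \<forall>n\<ge>F. n \<in> semigroup_gen d a"
proof -
  have "d \<ge> 1"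
    using coprime by (cases d) auto
  define g where "g = a 1"
  have "g > 0" and g_in: "g \<in> semigroup_gen d a"
    using pos \<open>d \<ge> 1\<close> semigroup_gen_generator[where j = 1 and d = d and a = a]
    by (auto simp: g_def)
  obtain c where c: "(\<Sum>i=1..d. c i * a i) = 1"
    using sum_eq_Gcd[where d = d and a = a] coprime by auto
  \<comment> \<open>Reducing the Bezout coefficients mod \<open>g\<close> makes them nonnegative.\<close>
  define s where "s = (\<Sum>i=1..d. (c i mod g) * a i)"
  have s_in: "s \<in> semigroup_gen d a"
    unfolding s_def using \<open>g > 0\<close> by (intro semigroup_genI) simp
  have "s \<ge> 0"
    using semigroup_gen_nonneg[OF _ s_in] pos by (simp add: less_imp_le)
  have "s - 1 = g * (\<Sum>i=1..d. - (c i div g) * a i)"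
    unfolding s_def c[symmetric]
    by (simp add: sum_subtractf[symmetric] sum_distrib_left algebra_simps
        flip: minus_div_mult_eq_mod)
  then have "g dvd s - 1" by simp
  then show ?thesis
    using mem_semigroup_gen_if_ge[OF g_in \<open>g > 0\<close> s_in \<open>s \<ge> 0\<close>] by blast
qed

lemma mem_Splus_iff: "y \<in> Splus d a N \<longleftrightarrow> y - N \<in> semigroup_gen d a"
  unfolding Splus_def semigroup_gen_def by (auto simp: algebra_simps)

lemma mem_Sset_iff: "y \<in> Sset d a N \<longleftrightarrow> y \<in> Splus d a N \<or> - y \<in> Splus d a N"
  unfolding Sset_def Sminus_def by (auto simp: image_iff) (metis minus_minus)

lemma Splus_pos:
  assumes "\<forall>j\<in>{1..d}. a j \<ge> 0" and "N > 0" and "y \<in> Splus d a N"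
  shows "y > 0"
  using assms semigroup_gen_nonneg[of d a "y - N"] by (simp add: mem_Splus_iff)

lemma Splus_add_semigroup_gen:
  assumes "y \<in> Splus d a N" and "t \<in> semigroup_gen d a"
  shows "y + t \<in> Splus d a N"
  using assms semigroup_gen_add[of "y - N" d a t] by (simp add: mem_Splus_iff algebra_simps)

lemma Splus_contains_large:
  assumes "\<forall>j\<in>{1..d}. a j > 0" and "Gcd (a ` {1..d}) = 1"
  shows "\<exists>F. \<forall>n\<ge>F. n \<in> Splus d a N"
proof -
  obtain F where "\<forall>n\<ge>F. n \<in> semigroup_gen d a"
    using semigroup_gen_contains_large[OF assms] by blast
  then have "\<forall>n\<ge>F + N. n \<in> Splus d a N"
    by (simp add: mem_Splus_iff)
  then show ?thesis by blast
qed

lemma frakM_diff_notin_Splus: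
  assumes "M \<in> frakM d a N" and "m \<in> M" and "m' \<in> M"
  shows "m - m' \<notin> Splus d a N"
  using assms unfolding frakM_def mem_Sset_iff by blast

lemma maximal_frakM_comparable:
  assumes "\<forall>j\<in>{1..d}. a j \<ge> 0" and "N > 0"
    and "maximal_in M (frakM d a N)" and "x \<notin> M"
  shows "\<exists>m\<in>M. x - m \<in> Splus d a N \<or> m - x \<in> Splus d a N"
proof -
  have "M \<in> frakM d a N" and "insert x M \<notin> frakM d a N"
    using assms(3,4) unfolding maximal_in_def by auto
  then obtain u v where "u \<in> insert x M" "v \<in> insert x M" "u - v \<in> Sset d a N"
    and "\<not> (u \<in> M \<and> v \<in> M)"
    unfolding frakM_def by blast
  moreover have "0 \<notin> Sset d a N"
    using Splus_pos[OF assms(1,2)] by (auto simp: mem_Sset_iff)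
  ultimately show ?thesis
    by (auto simp: mem_Sset_iff)
qed

lemma maximal_frakM_below_step:
  assumes "\<forall>j\<in>{1..d}. a j \<ge> 0" and "N > 0" and max: "maximal_in M (frakM d a N)"
    and "m \<in> M" and below: "m - x \<in> Splus d a N" and "x + N \<notin> M"
  shows "\<exists>m'\<in>M. m' - (x + N) \<in> Splus d a N"
proof (rule ccontr)
  assume "\<not> ?thesis"
  then obtain m' where "m' \<in> M" and above: "x + N - m' \<in> Splus d a N"
    using maximal_frakM_comparable[OF assms(1,2) max \<open>x + N \<notin> M\<close>] by blast
  have "m - (x + N) \<in> semigroup_gen d a"
    using below by (simp add: mem_Splus_iff algebra_simps)
  from Splus_add_semigroup_gen[OF above this] have "m - m' \<in> Splus d a N"
    by (simp add: algebra_simps)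
  moreover have "M \<in> frakM d a N"
    using max by (simp add: maximal_in_def)
  ultimately show False
    using frakM_diff_notin_Splus \<open>m \<in> M\<close> \<open>m' \<in> M\<close> by blast
qed

lemma maximal_frakM_below_residue_class:
  assumes "\<forall>j\<in>{1..d}. a j \<ge> 0" and "N > 0" and max: "maximal_in M (frakM d a N)"
    and avoid: "\<And>k. i + k * N \<notin> M"
    and "m \<in> M" and "m - (i + k0 * N) \<in> Splus d a N" and "k \<ge> k0"
  shows "\<exists>m\<in>M. m - (i + k * N) \<in> Splus d a N"
  using \<open>k \<ge> k0\<close>
proof (induction k rule: int_ge_induct)
  case base
  then show ?case
    using assms(5,6) by blast
next
  case (step k)
  obtain m where "m \<in> M" "m - (i + k * N) \<in> Splus d a N"
    using step.IH by blast
  moreover have "i + k * N + N \<notin> M"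
    using avoid[of "k + 1"] by (simp add: algebra_simps)
  ultimately have "\<exists>m'\<in>M. m' - (i + k * N + N) \<in> Splus d a N"
    by (rule maximal_frakM_below_step[OF assms(1,2) max])
  then show ?case
    by (simp add: algebra_simps)
qed

theorem mainTheorem15:
  fixes d :: nat and a :: "nat \<Rightarrow> int" and N :: int and M :: "int set" and i :: int
  assumes "\<forall>j\<in>{1..d}. a j > 0"
    and "Gcd (a ` {1..d}) = 1"
    and "N > 0"
    and "maximal_in M (frakM d a N)"
    and "0 \<in> M"
    and "0 \<le> i" and "i < N"
  shows "\<exists>m\<in>M. m mod N = i"
proof (rule ccontr)
  assume "\<not> ?thesis"
  then have avoid: "i + k * N \<notin> M" for k
    using assms(3,6,7) by force
  have nonneg: "\<forall>j\<in>{1..d}. a j \<ge> 0"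
    using assms(1) by (simp add: less_imp_le)
  obtain F where F: "\<And>n. n \<ge> F \<Longrightarrow> n \<in> Splus d a N"
    using Splus_contains_large[OF assms(1,2)] by blast
  have "M \<in> frakM d a N"
    using assms(4) by (simp add: maximal_in_def)
  then have M_bounded: "m < F" if "m \<in> M" for m
    using frakM_diff_notin_Splus[OF _ that \<open>0 \<in> M\<close>] F[of m] by force
  define K where "K = i + \<bar>F\<bar>"
  have "K \<le> K * N"
    using \<open>N > 0\<close> \<open>0 \<le> i\<close> mult_left_mono[of 1 N K] by (simp add: K_def)
  moreover have "i + F \<le> K"
    by (simp add: K_def)
  ultimately have "F \<le> 0 - (i + (- K) * N)" and "F \<le> i + K * N"
    using \<open>0 \<le> i\<close> by auto
  then obtain m where "m \<in> M" "m - (i + K * N) \<in> Splus d a N"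
    using maximal_frakM_below_residue_class[OF nonneg \<open>N > 0\<close> assms(4) avoid \<open>0 \<in> M\<close>, of "- K" K]
      F \<open>0 \<le> i\<close> by (auto simp: K_def)
  then show False
    using Splus_pos[OF nonneg \<open>N > 0\<close>] M_bounded \<open>F \<le> i + K * N\<close> by force
qed

end
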